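(* Let $\sigma$ be an automorphism of $\mathcal{H}_N'$, or an automorphism of $\mathcal{H}_N$ with $\sigma(\mathcal{H}_N')=\mathcal{H}_N'$. Suppose that for every $\bm r\in\mathbb{Z}^N\setminus\{\bm 0\}$ there is $\bm s\in\mathbb{Z}^N\setminus\{\bm0\}$ with $\sigma(\mathbb{K}h_{\bm r})=\mathbb{K}h_{\bm s}$ and $\sigma(\mathbb{K}h_{-\bm r})=\mathbb{K}h_{-\bm s}$. Then there exist $\lambda=(\lambda_1,\dots,\lambda_N)\in(\mathbb{K}^\times)^N$ and $\bm Q\in\mathbf{GSp}_N(\mathbb{Z})$ such that for all $\bm r=(r_1,\dots,r_N)^\top\in\mathbb{Z}^N\setminus\{\bm0\}$, $$\sigma(D(\overline{\bm r},\bm r))=\begin{cases}\lambda^{\bm r}D(\bm Q^{-\top}\overline{\bm r},\bm Q\bm r), & \text{if } \bm Q^\top\bm J\bm Q=\bm J,\\ (-1)^{|\bm r|}\lambda^{\bm r}D(\bm Q^{-\top}\overline{\bm r},\bm Q\bm r), & \text{if } \bm Q^\top\bm J\bm Q=-\bm J,\end{cases}$$ where $\lambda^{\bm r}=\prod_i\lambda_i^{r_i}$ and $|\bm r|=\sum_i r_i$.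
   Context: $\mathbb{K}$ is an algebraically closed field of characteristic zero, $N=2m\ge2$ even, $(\cdot,\cdot)$ the bilinear form on $\mathbb{K}^N$ with $(e_i,e_j)=\delta_{ij}$. Let $A_N=\mathbb{K}[t_1^{\pm1},\dots,t_N^{\pm1}]$, $d_i=t_i\frac{\partial}{\partial t_i}$, $t^{\bm r}=t_1^{r_1}\cdots t_N^{r_N}$, $D(u,\bm r)=\sum_i u_it^{\bm r}d_i$ for $u\in\mathbb{K}^N$, $\bm r\in\mathbb{Z}^N$. Let $\bm J=\begin{pmatrix} O_m & I_m\\ -I_m & O_m\end{pmatrix}$, $\overline{\bm r}=\bm J\bm r$, $h_{\bm r}=D(\overline{\bm r},\bm r)$. The Hamiltonian Lie algebra is $\mathcal{H}_N=\operatorname{span}_{\mathbb{K}}\{h_{\bm r}:\bm r\ne\bm0\}\oplus\operatorname{span}_{\mathbb{K}}\{d_1,\dots,d_N\}$ (commutator bracket, $[h_{\bm r},h_{\bm s}]=(\overline{\bm r},\bm s)h_{\bm r+\bm s}$), and $\mathcal{H}_N'=\operatorname{span}_{\mathbb{K}}\{h_{\bm r}:\bm r\ne\bm0\}$ its derived subalgebra, whose degree-$\bm r$ component is $\mathbb{K}h_{\bm r}$. $\mathbf{GSp}_N(\mathbb{Z})=\{\bm Q\in\mathbf{GL}_N(\mathbb{Z}):\bm Q^\top\bm J\bm Q=\pm\bm J\}$; $\bm Q^{-\top}=(\bm Q^{-1})^\top$. *)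

theory Defs
  imports Main "HOL-Computational_Algebra.Polynomial"
begin

text \<open>Integer vectors of Z^N are functions nat => int vanishing at indices >= N;
K-vectors of K^N are functions nat => 'k (only indices < N are used).
An element of the Witt algebra W_N = Der(A_N) is a function
w :: (nat => int) => nat => 'k, where w r i is the coefficient of t^r d_i.\<close>

type_synonym 'k wel = "(nat \<Rightarrow> int) \<Rightarrow> nat \<Rightarrow> 'k"

definition Zn :: "nat \<Rightarrow> (nat \<Rightarrow> int) set" where
  "Zn N = {r. \<forall>i. N \<le> i \<longrightarrow> r i = 0}"

definition zerov :: "nat \<Rightarrow> int" where "zerov = (\<lambda>_. 0)"

definition vadd :: "(nat \<Rightarrow> int) \<Rightarrow> (nat \<Rightarrow> int) \<Rightarrow> nat \<Rightarrow> int" where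
  "vadd r s = (\<lambda>i. r i + s i)"

definition vneg :: "(nat \<Rightarrow> int) \<Rightarrow> nat \<Rightarrow> int" where
  "vneg r = (\<lambda>i. - r i)"

definition bil :: "nat \<Rightarrow> (nat \<Rightarrow> 'k::field) \<Rightarrow> (nat \<Rightarrow> 'k) \<Rightarrow> 'k" where
  "bil N u v = (\<Sum>i<N. u i * v i)"

definition ofi :: "(nat \<Rightarrow> int) \<Rightarrow> nat \<Rightarrow> 'k::field" where
  "ofi v = (\<lambda>i. of_int (v i))"

definition Dv :: "nat \<Rightarrow> (nat \<Rightarrow> 'k::field) \<Rightarrow> (nat \<Rightarrow> int) \<Rightarrow> 'k wel" where
  "Dv N u r = (\<lambda>s i. if s = r \<and> i < N then u i else 0)"

definition wadd :: "'k::field wel \<Rightarrow> 'k wel \<Rightarrow> 'k wel" where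
  "wadd x y = (\<lambda>s i. x s i + y s i)"

definition wscale :: "'k::field \<Rightarrow> 'k wel \<Rightarrow> 'k wel" where
  "wscale c x = (\<lambda>s i. c * x s i)"

definition wsupp :: "nat \<Rightarrow> 'k::field wel \<Rightarrow> (nat \<Rightarrow> int) set" where
  "wsupp N w = {r. \<exists>i<N. w r i \<noteq> 0}"

text \<open>Lie bracket of W_N:
 [D(u,r), D(v,s)] = D((u,s) v - (v,r) u, r + s), extended bilinearly.\<close>
definition wbr :: "nat \<Rightarrow> 'k::field wel \<Rightarrow> 'k wel \<Rightarrow> 'k wel" where
  "wbr N x y = (\<lambda>t i. \<Sum>p\<in>wsupp N x \<times> wsupp N y.
      if vadd (fst p) (snd p) = t \<and> i < N then
        bil N (x (fst p)) (ofi (snd p)) * y (snd p) i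
        - bil N (y (snd p)) (ofi (fst p)) * x (fst p) i
      else 0)"

text \<open>Integer N x N matrices as nat => nat => int (only indices < N used).\<close>
definition mvec :: "nat \<Rightarrow> (nat \<Rightarrow> nat \<Rightarrow> int) \<Rightarrow> (nat \<Rightarrow> int) \<Rightarrow> nat \<Rightarrow> int" where
  "mvec N A v = (\<lambda>i. if i < N then (\<Sum>j<N. A i j * v j) else 0)"

definition mmul :: "nat \<Rightarrow> (nat \<Rightarrow> nat \<Rightarrow> int) \<Rightarrow> (nat \<Rightarrow> nat \<Rightarrow> int) \<Rightarrow> nat \<Rightarrow> nat \<Rightarrow> int" where
  "mmul N A B = (\<lambda>i j. \<Sum>k<N. A i k * B k j)"

definition mtr :: "(nat \<Rightarrow> nat \<Rightarrow> int) \<Rightarrow> nat \<Rightarrow> nat \<Rightarrow> int" where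
  "mtr A = (\<lambda>i j. A j i)"

definition mid :: "nat \<Rightarrow> nat \<Rightarrow> int" where
  "mid = (\<lambda>i j. if i = j then 1 else 0)"

definition meq :: "nat \<Rightarrow> (nat \<Rightarrow> nat \<Rightarrow> int) \<Rightarrow> (nat \<Rightarrow> nat \<Rightarrow> int) \<Rightarrow> bool" where
  "meq N A B \<longleftrightarrow> (\<forall>i<N. \<forall>j<N. A i j = B i j)"

text \<open>J = [[0, I_m], [-I_m, 0]] (size 2m).\<close>
definition Jmat :: "nat \<Rightarrow> nat \<Rightarrow> nat \<Rightarrow> int" where
  "Jmat m = (\<lambda>i j. if i < m \<and> j = i + m then 1
                   else if m \<le> i \<and> i < 2*m \<and> j + m = i then -1 else 0)"

definition mneg :: "(nat \<Rightarrow> nat \<Rightarrow> int) \<Rightarrow> nat \<Rightarrow> nat \<Rightarrow> int" where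
  "mneg A = (\<lambda>i j. - A i j)"

definition is_inv :: "nat \<Rightarrow> (nat \<Rightarrow> nat \<Rightarrow> int) \<Rightarrow> (nat \<Rightarrow> nat \<Rightarrow> int) \<Rightarrow> bool" where
  "is_inv N Q P \<longleftrightarrow> meq N (mmul N Q P) mid \<and> meq N (mmul N P Q) mid"

definition GSp :: "nat \<Rightarrow> (nat \<Rightarrow> nat \<Rightarrow> int) set" where
  "GSp m = {Q. (\<exists>P. is_inv (2*m) Q P) \<and>
     (meq (2*m) (mmul (2*m) (mmul (2*m) (mtr Q) (Jmat m)) Q) (Jmat m) \<or>
      meq (2*m) (mmul (2*m) (mmul (2*m) (mtr Q) (Jmat m)) Q) (mneg (Jmat m)))}"

definition rbar :: "nat \<Rightarrow> (nat \<Rightarrow> int) \<Rightarrow> nat \<Rightarrow> int" where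
  "rbar m r = mvec (2*m) (Jmat m) r"

definition hv :: "nat \<Rightarrow> (nat \<Rightarrow> int) \<Rightarrow> 'k::field wel" where
  "hv m r = Dv (2*m) (ofi (rbar m r)) r"

definition dd :: "nat \<Rightarrow> nat \<Rightarrow> 'k::field wel" where
  "dd N j = Dv N (\<lambda>k. if k = j then 1 else 0) zerov"

text \<open>H_N' = span {h_r : r <> 0}, H_N = H_N' + span {d_1..d_N}.\<close>
definition Hder :: "nat \<Rightarrow> 'k::field wel set" where
  "Hder m = {(\<lambda>s i. \<Sum>r\<in>F. c r * hv m r s i) | F c.
               finite F \<and> F \<subseteq> Zn (2*m) - {zerov}}"

definition Ham :: "nat \<Rightarrow> 'k::field wel set" where
  "Ham m = {(\<lambda>s i. x s i + (\<Sum>j<2*m. a j * dd (2*m) j s i)) | x a. x \<in> Hder m}"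

definition lie_aut :: "nat \<Rightarrow> 'k::field wel set \<Rightarrow> ('k wel \<Rightarrow> 'k wel) \<Rightarrow> bool" where
  "lie_aut N L \<sigma> \<longleftrightarrow> bij_betw \<sigma> L L \<and>
     (\<forall>x\<in>L. \<forall>y\<in>L. \<sigma> (wadd x y) = wadd (\<sigma> x) (\<sigma> y)) \<and>
     (\<forall>c. \<forall>x\<in>L. \<sigma> (wscale c x) = wscale c (\<sigma> x)) \<and>
     (\<forall>x\<in>L. \<forall>y\<in>L. \<sigma> (wbr N x y) = wbr N (\<sigma> x) (\<sigma> y))"

definition kline :: "'k::field wel \<Rightarrow> 'k wel set" where
  "kline w = {wscale c w | c. True}"

definition lpow :: "nat \<Rightarrow> (nat \<Rightarrow> 'k::field) \<Rightarrow> (nat \<Rightarrow> int) \<Rightarrow> 'k" where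
  "lpow N l r = (\<Prod>i<N. l i powi r i)"

definition vabs :: "nat \<Rightarrow> (nat \<Rightarrow> int) \<Rightarrow> int" where
  "vabs N r = (\<Sum>i<N. r i)"

end

theory Submission
  imports Defs "HOL-Library.Function_Algebras"
begin

text \<open>The elements h_r satisfy [h_r, h_s] = \<omega>(r, s) h_{r+s} for the symplectic form
  \<omega>(r, s) = (J r, s). Writing \<sigma>(h_r) = c_r h_{\<phi>(r)}, comparing brackets shows that \<phi> is
  additive on pairs with \<omega>(r, s) \<noteq> 0, that c satisfies a cocycle identity there, and that \<phi>
  preserves \<omega>-orthogonality. Since finitely many affine hyperplanes \<omega>(a, \<cdot>) = c never cover
  \<int>^N, such relations extend to all pairs: \<phi> becomes an additive bijection Q of \<int>^N preserving
  \<omega>-orthogonality, which forces Q^T J Q = \<mu> J with \<mu> = \<plusminus>1, and \<mu> c_r becomes a character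
  r \<mapsto> \<lambda>^r of \<int>^N. When \<mu> = -1, replacing \<lambda> by -\<lambda> produces the sign (-1)^{|r|}.\<close>

section \<open>Integer vectors and additive maps\<close>

lemma zerov_eq: "zerov = 0"
  by (simp add: zerov_def zero_fun_def)

lemma vadd_eq: "vadd r s = r + s"
  by (simp add: vadd_def plus_fun_def)

abbreviation Znz :: "nat \<Rightarrow> (nat \<Rightarrow> int) set" where
  "Znz N \<equiv> Zn N - {0}"

lemma Zn_zero [simp]: "0 \<in> Zn N"
  by (simp add: Zn_def)

lemma Zn_add [intro]: "r \<in> Zn N \<Longrightarrow> s \<in> Zn N \<Longrightarrow> r + s \<in> Zn N"
  by (simp add: Zn_def)

lemma Zn_minus [intro]: "r \<in> Zn N \<Longrightarrow> - r \<in> Zn N"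
  by (simp add: Zn_def)

lemma Zn_diff [intro]: "r \<in> Zn N \<Longrightarrow> s \<in> Zn N \<Longrightarrow> r - s \<in> Zn N"
  by (simp add: Zn_def)

lemma Zn_nonzero_coord:
  assumes "r \<in> Znz N" obtains j where "j < N" "r j \<noteq> 0"
  using assms by (auto simp: Zn_def fun_eq_iff) (meson not_le)

definition unit_vec :: "nat \<Rightarrow> nat \<Rightarrow> int" where
  "unit_vec j = (\<lambda>i. if i = j then 1 else 0)"

lemma Zn_unit_vec [intro]: "j < N \<Longrightarrow> unit_vec j \<in> Zn N"
  by (simp add: Zn_def unit_vec_def)

definition trunc_vec :: "nat \<Rightarrow> (nat \<Rightarrow> int) \<Rightarrow> nat \<Rightarrow> int" where
  "trunc_vec n r = (\<lambda>i. if i < n then r i else 0)"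

definition scale_vec :: "int \<Rightarrow> (nat \<Rightarrow> int) \<Rightarrow> nat \<Rightarrow> int" where
  "scale_vec k r = (\<lambda>i. k * r i)"

lemma Zn_trunc_vec: "n \<le> N \<Longrightarrow> trunc_vec n r \<in> Zn N"
  by (simp add: Zn_def trunc_vec_def)

lemma Zn_scale_vec: "r \<in> Zn N \<Longrightarrow> scale_vec k r \<in> Zn N"
  by (simp add: Zn_def scale_vec_def)

lemma trunc_vec_0: "trunc_vec 0 r = 0"
  by (simp add: trunc_vec_def fun_eq_iff)

lemma trunc_vec_Suc: "trunc_vec (Suc n) r = trunc_vec n r + scale_vec (r n) (unit_vec n)"
  by (auto simp: trunc_vec_def scale_vec_def unit_vec_def fun_eq_iff less_Suc_eq)

lemma trunc_vec_Zn: "r \<in> Zn N \<Longrightarrow> trunc_vec N r = r"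
  by (auto simp: trunc_vec_def Zn_def fun_eq_iff)

lemma scale_vec_0: "scale_vec 0 r = 0"
  by (simp add: scale_vec_def fun_eq_iff)

lemma scale_vec_add1: "scale_vec (k + 1) r = scale_vec k r + r"
  by (simp add: scale_vec_def fun_eq_iff algebra_simps)

lemma scale_vec_diff1: "scale_vec k r = scale_vec (k - 1) r + r"
  by (simp add: scale_vec_def fun_eq_iff algebra_simps)

definition Zn_additive :: "nat \<Rightarrow> ((nat \<Rightarrow> int) \<Rightarrow> 'a::plus) \<Rightarrow> bool" where
  "Zn_additive N f \<longleftrightarrow> (\<forall>r\<in>Zn N. \<forall>s\<in>Zn N. f (r + s) = f r + f s)"

lemma Zn_additiveD: "Zn_additive N f \<Longrightarrow> r \<in> Zn N \<Longrightarrow> s \<in> Zn N \<Longrightarrow> f (r + s) = f r + f s"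
  by (simp add: Zn_additive_def)

lemma Zn_additive_zero:
  fixes f :: "(nat \<Rightarrow> int) \<Rightarrow> 'a::cancel_comm_monoid_add"
  assumes "Zn_additive N f" shows "f 0 = 0"
  using Zn_additiveD[OF assms Zn_zero Zn_zero] by (metis add_0 add_cancel_right_right)

lemma Zn_additive_diff:
  fixes f :: "(nat \<Rightarrow> int) \<Rightarrow> 'a::ab_group_add"
  assumes "Zn_additive N f" "r \<in> Zn N" "s \<in> Zn N"
  shows "f (r - s) = f r - f s"
  using Zn_additiveD[OF assms(1) Zn_diff[OF assms(2,3)] assms(3)] by (simp add: algebra_simps)

lemma Zn_additive_component: "Zn_additive N \<Phi> \<Longrightarrow> Zn_additive N (\<lambda>r. \<Phi> r i)"
  by (simp add: Zn_additive_def)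

lemma Zn_additive_inv_into:
  assumes bij: "bij_betw \<Phi> (Zn N) (Zn N)" and add: "Zn_additive N \<Phi>"
  shows "Zn_additive N (inv_into (Zn N) \<Phi>)"
  unfolding Zn_additive_def
proof (intro ballI)
  fix x y assume x: "x \<in> Zn N" and y: "y \<in> Zn N"
  let ?\<Psi> = "inv_into (Zn N) \<Phi>"
  have \<Psi>: "?\<Psi> x \<in> Zn N" "?\<Psi> y \<in> Zn N" "\<Phi> (?\<Psi> x) = x" "\<Phi> (?\<Psi> y) = y"
    using x y bij by (auto simp: bij_betw_def inv_into_into f_inv_into_f)
  then have "\<Phi> (?\<Psi> x + ?\<Psi> y) = x + y"
    using Zn_additiveD[OF add] by simp
  then show "?\<Psi> (x + y) = ?\<Psi> x + ?\<Psi> y"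
    using bij \<Psi> by (auto simp: bij_betw_def intro: inv_into_f_eq)
qed

lemma Zn_additive_scale_vec:
  fixes f :: "(nat \<Rightarrow> int) \<Rightarrow> 'a::comm_ring_1"
  assumes f: "Zn_additive N f" and r: "r \<in> Zn N"
  shows "f (scale_vec k r) = of_int k * f r"
proof (induction k rule: int_induct[where k = 0])
  case base
  show "f (scale_vec 0 r) = of_int 0 * f r" using Zn_additive_zero[OF f] by (simp add: scale_vec_0)
next
  case (step1 k)
  have "f (scale_vec (k + 1) r) = f (scale_vec k r) + f r"
    unfolding scale_vec_add1 using f r by (simp add: Zn_additiveD Zn_scale_vec)
  with step1 show ?case by (simp add: algebra_simps)
next
  case (step2 k)
  have "f (scale_vec k r) = f (scale_vec (k - 1) r) + f r"
    by (subst scale_vec_diff1) (use f r in \<open>simp add: Zn_additiveD Zn_scale_vec\<close>)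
  with step2 show ?case by (simp add: algebra_simps)
qed

lemma Zn_additive_expansion:
  fixes f :: "(nat \<Rightarrow> int) \<Rightarrow> 'a::comm_ring_1"
  assumes f: "Zn_additive N f" and r: "r \<in> Zn N"
  shows "f r = (\<Sum>j<N. of_int (r j) * f (unit_vec j))"
proof -
  have "f (trunc_vec n r) = (\<Sum>j<n. of_int (r j) * f (unit_vec j))" if "n \<le> N" for n
    using that
  proof (induction n)
    case 0
    show "f (trunc_vec 0 r) = (\<Sum>j<0. of_int (r j) * f (unit_vec j))"
      using Zn_additive_zero[OF f] by (simp add: trunc_vec_0)
  next
    case (Suc n)
    have "f (trunc_vec (Suc n) r) = f (trunc_vec n r) + f (scale_vec (r n) (unit_vec n))"
      unfolding trunc_vec_Suc using Suc.prems
      by (intro Zn_additiveD[OF f] Zn_trunc_vec Zn_scale_vec Zn_unit_vec) auto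
    also have "\<dots> = (\<Sum>j<Suc n. of_int (r j) * f (unit_vec j))"
      using Suc Zn_additive_scale_vec[OF f Zn_unit_vec] by simp
    finally show ?case .
  qed
  then show ?thesis using trunc_vec_Zn[OF r] by (metis order_refl)
qed

lemma Zn_additive_eqI:
  fixes f g :: "(nat \<Rightarrow> int) \<Rightarrow> 'a::comm_ring_1"
  assumes "Zn_additive N f" "Zn_additive N g" "\<And>j. j < N \<Longrightarrow> f (unit_vec j) = g (unit_vec j)"
    and "r \<in> Zn N"
  shows "f r = g r"
  using assms by (simp add: Zn_additive_expansion)

lemma Zn_multiplicative_expansion:
  fixes f :: "(nat \<Rightarrow> int) \<Rightarrow> 'a::field"
  assumes mult: "\<And>r s. r \<in> Zn N \<Longrightarrow> s \<in> Zn N \<Longrightarrow> f (r + s) = f r * f s"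
    and nonzero: "\<And>r. r \<in> Zn N \<Longrightarrow> f r \<noteq> 0"
    and r: "r \<in> Zn N"
  shows "f r = (\<Prod>j<N. f (unit_vec j) powi r j)"
proof -
  have f0: "f 0 = 1"
    using mult[OF Zn_zero Zn_zero] nonzero[OF Zn_zero] by simp
  have scale: "f (scale_vec k x) = f x powi k" if x: "x \<in> Zn N" for k x
  proof (induction k rule: int_induct[where k = 0])
    case base
    show "f (scale_vec 0 x) = f x powi 0" using f0 by (simp add: scale_vec_0)
  next
    case (step1 k)
    have "f (scale_vec (k + 1) x) = f (scale_vec k x) * f x"
      unfolding scale_vec_add1 using x by (simp add: mult Zn_scale_vec)
    with step1 nonzero[OF x] show ?case by (simp add: power_int_add_1)
  next
    case (step2 k)
    have "f (scale_vec k x) = f (scale_vec (k - 1) x) * f x"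
      by (subst scale_vec_diff1) (use x in \<open>simp add: mult Zn_scale_vec\<close>)
    with step2 nonzero[OF x] show ?case by (simp add: power_int_diff field_simps)
  qed
  have "f (trunc_vec n r) = (\<Prod>j<n. f (unit_vec j) powi r j)" if "n \<le> N" for n
    using that
  proof (induction n)
    case 0
    show "f (trunc_vec 0 r) = (\<Prod>j<0. f (unit_vec j) powi r j)"
      using f0 by (simp add: trunc_vec_0)
  next
    case (Suc n)
    have "f (trunc_vec (Suc n) r) = f (trunc_vec n r) * f (scale_vec (r n) (unit_vec n))"
      unfolding trunc_vec_Suc using Suc.prems
      by (intro mult Zn_trunc_vec Zn_scale_vec Zn_unit_vec) auto
    also have "\<dots> = (\<Prod>j<Suc n. f (unit_vec j) powi r j)"
      using Suc scale[OF Zn_unit_vec] by simp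
    finally show ?case .
  qed
  then show ?thesis using trunc_vec_Zn[OF r] by (metis order_refl)
qed

section \<open>The symplectic form\<close>

text \<open>sympl m r s is the form \<omega>(r, s) = (J r, s) of the paper, see sum_mult_rbar below.\<close>

definition sympl :: "nat \<Rightarrow> (nat \<Rightarrow> int) \<Rightarrow> (nat \<Rightarrow> int) \<Rightarrow> int" where
  "sympl m r s = (\<Sum>i<m. r (i + m) * s i - r i * s (i + m))"

lemma sympl_add_left: "sympl m (r + r') s = sympl m r s + sympl m r' s"
  by (simp add: sympl_def sum.distrib[symmetric] algebra_simps)

lemma sympl_add_right: "sympl m r (s + s') = sympl m r s + sympl m r s'"
  by (simp add: sympl_def sum.distrib[symmetric] algebra_simps)

lemma sympl_minus_left: "sympl m (- r) s = - sympl m r s"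
  by (simp add: sympl_def sum_negf[symmetric] algebra_simps)

lemma sympl_minus_right: "sympl m r (- s) = - sympl m r s"
  by (simp add: sympl_def sum_negf[symmetric] algebra_simps)

lemma sympl_diff_right: "sympl m r (s - s') = sympl m r s - sympl m r s'"
  by (simp add: sympl_def sum_subtractf[symmetric] algebra_simps)

lemma sympl_zero_left [simp]: "sympl m 0 s = 0"
  by (simp add: sympl_def)

lemma sympl_zero_right [simp]: "sympl m r 0 = 0"
  by (simp add: sympl_def)

lemma sympl_self [simp]: "sympl m r r = 0"
  by (simp add: sympl_def algebra_simps)

lemma sympl_swap: "sympl m s r = - sympl m r s"
  by (simp add: sympl_def sum_negf[symmetric] algebra_simps)

lemma sympl_nonzeroD:
  assumes "sympl m r s \<noteq> 0"
  shows "r \<noteq> 0" "s \<noteq> 0" "r + s \<noteq> 0"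
proof -
  show "r \<noteq> 0" "s \<noteq> 0" using assms by auto
  show "r + s \<noteq> 0"
  proof
    assume "r + s = 0"
    then have "s = - r" by (simp add: eq_neg_iff_add_eq_0 add.commute)
    with assms show False by (simp add: sympl_minus_right)
  qed
qed

lemma sum_lessThan_if_eq:
  fixes n k :: nat and c :: "'a::comm_monoid_add"
  shows "(\<Sum>i<n. if i = k \<and> P then c else 0) = (if k < n \<and> P then c else 0)"
  by (cases P) simp_all

lemma sympl_unit_vec: "sympl m (unit_vec a) (unit_vec b) =
  (if m \<le> a \<and> a < 2 * m \<and> b + m = a then 1 else if a < m \<and> b = a + m then -1 else 0)"
proof -
  have "sympl m (unit_vec a) (unit_vec b) =
      (\<Sum>i<m. if i = b \<and> b + m = a then 1 else 0) - (\<Sum>i<m. if i = a \<and> a + m = b then 1 else 0)"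
    unfolding sympl_def sum_subtractf[symmetric] by (rule sum.cong) (auto simp: unit_vec_def)
  then show ?thesis by (simp only: sum_lessThan_if_eq) auto
qed

text \<open>Along the moment curve t = (n, n^2, ..., n^{2m}), \<omega>(a, t) is a polynomial in n
  without constant term that is nonzero for a \<noteq> 0, so finitely many conditions
  \<omega>(a, t) \<noteq> c can be met simultaneously.\<close>

definition moment_vec :: "nat \<Rightarrow> int \<Rightarrow> nat \<Rightarrow> int" where
  "moment_vec m n = (\<lambda>i. if i < 2 * m then n ^ (i + 1) else 0)"

definition sympl_poly :: "nat \<Rightarrow> (nat \<Rightarrow> int) \<Rightarrow> int poly" where
  "sympl_poly m a = (\<Sum>i<m. monom (a (i + m)) (i + 1) - monom (a i) (i + m + 1))"

lemma Zn_moment_vec: "moment_vec m n \<in> Zn (2 * m)"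
  by (simp add: Zn_def moment_vec_def)

lemma poly_sympl_poly: "poly (sympl_poly m a) n = sympl m a (moment_vec m n)"
  unfolding sympl_poly_def sympl_def moment_vec_def poly_sum
  by (rule sum.cong) (auto simp: poly_monom algebra_simps)

lemma coeff_sympl_poly_Suc: "coeff (sympl_poly m a) (Suc k) =
  (if k < m then a (k + m) else 0) - (if m \<le> k \<and> k < 2 * m then a (k - m) else 0)"
proof -
  have "coeff (sympl_poly m a) (Suc k) =
      (\<Sum>i<m. if i = k \<and> True then a (i + m) else 0) - (\<Sum>i<m. if i = k - m \<and> m \<le> k then a i else 0)"
    unfolding sympl_poly_def coeff_sum sum_subtractf[symmetric] coeff_diff coeff_monom
    by (rule sum.cong) auto
  then show ?thesis by (simp only: sum_lessThan_if_eq) auto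
qed

lemma sympl_poly_nonconstant:
  assumes "a \<in> Znz (2 * m)"
  shows "sympl_poly m a - [:c:] \<noteq> 0"
proof -
  obtain j where j: "j < 2 * m" "a j \<noteq> 0" using Zn_nonzero_coord[OF assms] .
  define k where "k = (if j < m then j + m else j - m)"
  have "coeff (sympl_poly m a) (Suc k) \<noteq> 0"
    using j by (auto simp: k_def coeff_sympl_poly_Suc)
  then have "coeff (sympl_poly m a - [:c:]) (Suc k) \<noteq> 0" by simp
  then show ?thesis by auto
qed

lemma sympl_avoid_hyperplanes:
  assumes "finite B" "\<forall>(a, c)\<in>B. a \<in> Znz (2 * m)"
  obtains t where "t \<in> Zn (2 * m)" "\<forall>(a, c)\<in>B. sympl m a t \<noteq> c"
proof -
  let ?roots = "\<Union>(a, c)\<in>B. {n. poly (sympl_poly m a - [:c:]) n = 0}"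
  have "finite ?roots"
  proof (rule finite_UN_I[OF assms(1)], clarify)
    fix a c assume "(a, c) \<in> B"
    then have "sympl_poly m a - [:c:] \<noteq> 0" using assms(2) sympl_poly_nonconstant by blast
    then show "finite {n. poly (sympl_poly m a - [:c:]) n = 0}" by (rule poly_roots_finite)
  qed
  then obtain n where "n \<notin> ?roots"
    using ex_new_if_finite[OF infinite_UNIV_int] by blast
  then have "\<forall>(a, c)\<in>B. sympl m a (moment_vec m n) \<noteq> c"
    by (auto simp: poly_sympl_poly)
  with Zn_moment_vec show ?thesis by (rule that)
qed

text \<open>A relation that holds for every non-orthogonal pair propagates to all pairs: choose t with
  \<omega>(r + s, t), \<omega>(s, t) and \<omega>(r, s + t) nonzero and compare the two bracketings of r + s + t.\<close>

lemma (in comm_monoid) sympl_nonorth_hom_extend: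
  fixes g :: "(nat \<Rightarrow> int) \<Rightarrow> 'a"
  assumes hom: "\<And>r s. r \<in> Znz (2 * m) \<Longrightarrow> s \<in> Znz (2 * m) \<Longrightarrow> sympl m r s \<noteq> 0 \<Longrightarrow>
      g (r + s) = g r \<^bold>* g s"
    and cancel: "\<And>r x y. r \<in> Znz (2 * m) \<Longrightarrow> g r \<^bold>* x = g r \<^bold>* y \<Longrightarrow> x = y"
    and neutral: "g 0 = \<^bold>1"
    and r: "r \<in> Zn (2 * m)" and s: "s \<in> Zn (2 * m)"
  shows "g (r + s) = g r \<^bold>* g s"
proof -
  have inverse: "g r \<^bold>* g (- r) = \<^bold>1" if r: "r \<in> Znz (2 * m)" for r
  proof -
    obtain t where t: "t \<in> Zn (2 * m)" "\<forall>(a, c)\<in>{(r, 0)}. sympl m a t \<noteq> c"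
      by (rule sympl_avoid_hyperplanes[of "{(r, 0)}" m]) (use r in auto)
    have nonorth: "sympl m r (t - r) \<noteq> 0" "sympl m (- r) t \<noteq> 0"
      using t(2) by (simp_all add: sympl_diff_right sympl_minus_left)
    have vecs: "t \<in> Znz (2 * m)" "t - r \<in> Znz (2 * m)" "- r \<in> Znz (2 * m)"
      using t r sympl_nonzeroD(2)[OF nonorth(1)] sympl_nonzeroD(2)[OF nonorth(2)] by auto
    have "g t \<^bold>* (g r \<^bold>* g (- r)) = g r \<^bold>* (g (- r) \<^bold>* g t)"
      by (simp only: assoc commute left_commute)
    also have "\<dots> = g r \<^bold>* g (t - r)"
      using hom[OF vecs(3,1) nonorth(2)] by simp
    also have "\<dots> = g t"
      using hom[OF r vecs(2) nonorth(1)] by simp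
    finally have "g t \<^bold>* (g r \<^bold>* g (- r)) = g t \<^bold>* \<^bold>1"
      by (simp add: comm_neutral)
    then show ?thesis using cancel[OF vecs(1)] by blast
  qed
  consider "r = 0" | "s = 0" | "r + s = 0" | "r \<noteq> 0" "s \<noteq> 0" "r + s \<noteq> 0"
    by blast
  then show ?thesis
  proof cases
    case 1
    then show ?thesis by (simp add: neutral)
  next
    case 2
    then show ?thesis by (simp add: neutral comm_neutral)
  next
    case 3
    then have "s = - r" by (simp add: eq_neg_iff_add_eq_0 add.commute)
    with 3 r show ?thesis
      using inverse[of r] by (cases "r = 0") (simp_all add: neutral)
  next
    case 4
    obtain t where t: "t \<in> Zn (2 * m)"
      "\<forall>(a, c)\<in>{(r + s, 0), (s, 0), (r, - sympl m r s)}. sympl m a t \<noteq> c"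
      by (rule sympl_avoid_hyperplanes[of "{(r + s, 0), (s, 0), (r, - sympl m r s)}" m])
        (use 4 r s in auto)
    then have nonorth: "sympl m (r + s) t \<noteq> 0" "sympl m s t \<noteq> 0" "sympl m r (s + t) \<noteq> 0"
      by (auto simp: sympl_add_right)
    have vecs: "r + s \<in> Znz (2 * m)" "t \<in> Znz (2 * m)" "s \<in> Znz (2 * m)" "r \<in> Znz (2 * m)"
      "s + t \<in> Znz (2 * m)"
      using 4 r s t(1) sympl_nonzeroD(2)[OF nonorth(1)] sympl_nonzeroD(2)[OF nonorth(3)] by auto
    have "g t \<^bold>* g (r + s) = g (r + s + t)"
      using hom[OF vecs(1,2) nonorth(1)] by (simp add: commute)
    also have "\<dots> = g r \<^bold>* g (s + t)"
      using hom[OF vecs(4,5) nonorth(3)] by (simp add: add.assoc)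
    also have "\<dots> = g t \<^bold>* (g r \<^bold>* g s)"
      using hom[OF vecs(3,2) nonorth(2)] by (simp only: assoc commute left_commute)
    finally show ?thesis using cancel[OF vecs(2)] by blast
  qed
qed

lemma sympl_orth_preserving_unit_vec:
  fixes \<Phi> :: "(nat \<Rightarrow> int) \<Rightarrow> nat \<Rightarrow> int"
  assumes m: "1 \<le> m" and add: "Zn_additive (2 * m) \<Phi>"
    and orth: "\<And>r s. r \<in> Zn (2 * m) \<Longrightarrow> s \<in> Zn (2 * m) \<Longrightarrow> sympl m r s = 0 \<Longrightarrow>
      sympl m (\<Phi> r) (\<Phi> s) = 0"
    and ab: "a < 2 * m" "b < 2 * m"
  shows "sympl m (\<Phi> (unit_vec a)) (\<Phi> (unit_vec b)) =
    sympl m (\<Phi> (unit_vec m)) (\<Phi> (unit_vec 0)) * sympl m (unit_vec a) (unit_vec b)"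
proof -
  define B where "B r s = sympl m (\<Phi> r) (\<Phi> s)" for r s
  define \<mu> where "\<mu> = B (unit_vec m) (unit_vec 0)"
  have B_left: "Zn_additive (2 * m) (\<lambda>r. B r s)" and B_right: "Zn_additive (2 * m) (B r)" for r s
    using add by (simp_all add: Zn_additive_def B_def sympl_add_left sympl_add_right)
  have B_orth: "B (unit_vec a) (unit_vec b) = 0"
    if "a < 2 * m" "b < 2 * m" "sympl m (unit_vec a) (unit_vec b) = 0" for a b
    using orth that by (simp add: B_def Zn_unit_vec)
  have B_diag: "B (unit_vec (i + m)) (unit_vec i) = \<mu>" if i: "i < m" for i
  proof (cases "i = 0")
    case False
    have e: "unit_vec (i + m) \<in> Zn (2 * m)" "unit_vec m \<in> Zn (2 * m)"
      "unit_vec i \<in> Zn (2 * m)" "unit_vec 0 \<in> Zn (2 * m)"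
      using i m by auto
    txt \<open>The orthogonal pair e_{i+m} + e_m, e_i - e_0 ties the i-th hyperbolic pair to the 0-th.\<close>
    have "sympl m (unit_vec (i + m) + unit_vec m) (unit_vec i - unit_vec 0) = 0"
      using False i m by (simp add: sympl_add_left sympl_diff_right sympl_unit_vec)
    then have "B (unit_vec (i + m) + unit_vec m) (unit_vec i - unit_vec 0) = 0"
      using orth e by (simp add: B_def Zn_add Zn_diff)
    moreover have "B (unit_vec (i + m) + unit_vec m) (unit_vec i - unit_vec 0) =
        B (unit_vec (i + m)) (unit_vec i) - B (unit_vec (i + m)) (unit_vec 0)
        + B (unit_vec m) (unit_vec i) - \<mu>"
      using Zn_additiveD[OF B_left e(1,2)] Zn_additive_diff[OF B_right e(3,4)]
      by (simp add: \<mu>_def)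
    moreover have "B (unit_vec (i + m)) (unit_vec 0) = 0" "B (unit_vec m) (unit_vec i) = 0"
      using False i by (simp_all add: B_orth sympl_unit_vec)
    ultimately show ?thesis by simp
  qed (simp add: \<mu>_def)
  consider "m \<le> a" "b + m = a" | "a < m" "b = a + m" | "sympl m (unit_vec a) (unit_vec b) = 0"
    using ab by (cases "b + m = a"; cases "b = a + m") (auto simp: sympl_unit_vec)
  then have "B (unit_vec a) (unit_vec b) = \<mu> * sympl m (unit_vec a) (unit_vec b)"
  proof cases
    case 1
    then show ?thesis using B_diag[of b] ab by (simp add: sympl_unit_vec)
  next
    case 2
    then have "B (unit_vec a) (unit_vec b) = - B (unit_vec b) (unit_vec a)"
      by (simp add: B_def sympl_swap[of m "\<Phi> (unit_vec a)"])
    then show ?thesis using 2 B_diag[of a] by (simp add: sympl_unit_vec)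
  qed (simp add: B_orth ab)
  then show ?thesis by (simp add: B_def \<mu>_def)
qed

lemma sympl_orth_preserving_scale:
  fixes \<Phi> :: "(nat \<Rightarrow> int) \<Rightarrow> nat \<Rightarrow> int"
  assumes m: "1 \<le> m" and add: "Zn_additive (2 * m) \<Phi>"
    and orth: "\<And>r s. r \<in> Zn (2 * m) \<Longrightarrow> s \<in> Zn (2 * m) \<Longrightarrow> sympl m r s = 0 \<Longrightarrow>
      sympl m (\<Phi> r) (\<Phi> s) = 0"
    and r: "r \<in> Zn (2 * m)" and s: "s \<in> Zn (2 * m)"
  shows "sympl m (\<Phi> r) (\<Phi> s) = sympl m (\<Phi> (unit_vec m)) (\<Phi> (unit_vec 0)) * sympl m r s"
proof -
  let ?\<mu> = "sympl m (\<Phi> (unit_vec m)) (\<Phi> (unit_vec 0))"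
  have left: "Zn_additive (2 * m) (\<lambda>r. sympl m (\<Phi> r) (\<Phi> s))"
    and right: "Zn_additive (2 * m) (\<lambda>s. sympl m (\<Phi> r) (\<Phi> s))" for r s
    using add by (simp_all add: Zn_additive_def sympl_add_left sympl_add_right)
  have form_left: "Zn_additive (2 * m) (\<lambda>r. ?\<mu> * sympl m r s)"
    and form_right: "Zn_additive (2 * m) (\<lambda>s. ?\<mu> * sympl m r s)" for r s
    by (simp_all add: Zn_additive_def sympl_add_left sympl_add_right algebra_simps)
  have basis: "sympl m (\<Phi> (unit_vec a)) (\<Phi> s) = ?\<mu> * sympl m (unit_vec a) s" if a: "a < 2 * m" for a
    by (rule Zn_additive_eqI[OF right form_right _ s])
      (rule sympl_orth_preserving_unit_vec[OF m add orth a])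
  show ?thesis
    by (rule Zn_additive_eqI[OF left form_left _ r]) (rule basis)
qed

lemma sympl_orth_preserving_bij_scale_unit:
  fixes \<Phi> :: "(nat \<Rightarrow> int) \<Rightarrow> nat \<Rightarrow> int"
  assumes m: "1 \<le> m" and bij: "bij_betw \<Phi> (Zn (2 * m)) (Zn (2 * m))"
    and add: "Zn_additive (2 * m) \<Phi>"
    and orth_iff: "\<And>r s. r \<in> Zn (2 * m) \<Longrightarrow> s \<in> Zn (2 * m) \<Longrightarrow>
      sympl m (\<Phi> r) (\<Phi> s) = 0 \<longleftrightarrow> sympl m r s = 0"
  shows "sympl m (\<Phi> (unit_vec m)) (\<Phi> (unit_vec 0)) \<in> {1, -1}"
proof -
  define \<Psi> where "\<Psi> = inv_into (Zn (2 * m)) \<Phi>"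
  have \<Psi>: "\<Psi> x \<in> Zn (2 * m)" "\<Phi> (\<Psi> x) = x" if "x \<in> Zn (2 * m)" for x
    using that bij by (auto simp: \<Psi>_def bij_betw_def inv_into_into f_inv_into_f)
  have e: "unit_vec m \<in> Zn (2 * m)" "unit_vec 0 \<in> Zn (2 * m)"
    using m by auto
  have \<Phi>_scale: "sympl m (\<Phi> r) (\<Phi> s) = sympl m (\<Phi> (unit_vec m)) (\<Phi> (unit_vec 0)) * sympl m r s"
    if "r \<in> Zn (2 * m)" "s \<in> Zn (2 * m)" for r s
    using sympl_orth_preserving_scale[OF m add _ that] orth_iff by blast
  have \<Psi>_scale: "sympl m (\<Psi> r) (\<Psi> s) = sympl m (\<Psi> (unit_vec m)) (\<Psi> (unit_vec 0)) * sympl m r s"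
    if "r \<in> Zn (2 * m)" "s \<in> Zn (2 * m)" for r s
  proof (rule sympl_orth_preserving_scale[OF m _ _ that])
    show "Zn_additive (2 * m) \<Psi>"
      unfolding \<Psi>_def by (rule Zn_additive_inv_into[OF bij add])
    show "sympl m (\<Psi> x) (\<Psi> y) = 0"
      if "x \<in> Zn (2 * m)" "y \<in> Zn (2 * m)" "sympl m x y = 0" for x y
      using orth_iff[OF \<Psi>(1)[OF that(1)] \<Psi>(1)[OF that(2)]] \<Psi>(2) that by simp
  qed
  have "1 = sympl m (\<Phi> (\<Psi> (unit_vec m))) (\<Phi> (\<Psi> (unit_vec 0)))"
    using e m by (simp add: \<Psi> sympl_unit_vec)
  also have "\<dots> = sympl m (\<Phi> (unit_vec m)) (\<Phi> (unit_vec 0)) * sympl m (\<Psi> (unit_vec m)) (\<Psi> (unit_vec 0))"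
    using \<Phi>_scale[OF \<Psi>(1) \<Psi>(1)] \<Psi>_scale[OF e] e m by (simp add: sympl_unit_vec)
  finally show ?thesis
    by (auto simp: zmult_eq_1_iff dest: sym)
qed

section \<open>Integer matrices\<close>

definition mat_of :: "((nat \<Rightarrow> int) \<Rightarrow> nat \<Rightarrow> int) \<Rightarrow> nat \<Rightarrow> nat \<Rightarrow> int" where
  "mat_of \<Phi> = (\<lambda>i j. \<Phi> (unit_vec j) i)"

lemma mat_of_column: "(\<lambda>k. mat_of \<Phi> k j) = \<Phi> (unit_vec j)"
  by (simp add: mat_of_def)

lemma mvec_mat_of:
  assumes "Zn_additive N \<Phi>" "r \<in> Zn N" "\<Phi> r \<in> Zn N"
  shows "mvec N (mat_of \<Phi>) r = \<Phi> r"
proof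
  fix i
  show "mvec N (mat_of \<Phi>) r i = \<Phi> r i"
    using Zn_additive_expansion[OF Zn_additive_component[OF assms(1)] assms(2), of i] assms(3)
    by (auto simp: mvec_def mat_of_def Zn_def mult.commute)
qed

lemma mmul_mat_of: "i < N \<Longrightarrow> mmul N A (mat_of \<Psi>) i j = mvec N A (\<Psi> (unit_vec j)) i"
  by (simp add: mmul_def mvec_def mat_of_def)

lemma is_inv_mat_of:
  assumes add: "Zn_additive N \<Phi>" "Zn_additive N \<Psi>"
    and maps: "\<And>r. r \<in> Zn N \<Longrightarrow> \<Phi> r \<in> Zn N" "\<And>r. r \<in> Zn N \<Longrightarrow> \<Psi> r \<in> Zn N"
    and inverse: "\<And>r. r \<in> Zn N \<Longrightarrow> \<Phi> (\<Psi> r) = r" "\<And>r. r \<in> Zn N \<Longrightarrow> \<Psi> (\<Phi> r) = r"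
  shows "is_inv N (mat_of \<Phi>) (mat_of \<Psi>)"
proof -
  have "meq N (mmul N (mat_of F) (mat_of G)) mid"
    if "Zn_additive N F" "\<And>r. r \<in> Zn N \<Longrightarrow> G r \<in> Zn N" "\<And>r. r \<in> Zn N \<Longrightarrow> F (G r) = r"
    for F G :: "(nat \<Rightarrow> int) \<Rightarrow> nat \<Rightarrow> int"
    unfolding meq_def
  proof (intro allI impI)
    fix i j assume ij: "i < N" "j < N"
    then have "mmul N (mat_of F) (mat_of G) i j = F (G (unit_vec j)) i"
      using that by (simp add: mmul_mat_of mvec_mat_of Zn_unit_vec)
    also have "\<dots> = mid i j"
      using that(3)[OF Zn_unit_vec[OF ij(2)]] by (simp add: unit_vec_def mid_def)
    finally show "mmul N (mat_of F) (mat_of G) i j = mid i j" .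
  qed
  then show ?thesis using assms by (simp add: is_inv_def)
qed

lemma sum_split_double:
  fixes m :: nat and g :: "nat \<Rightarrow> 'a::comm_monoid_add"
  shows "(\<Sum>i<2 * m. g i) = (\<Sum>i<m. g i) + (\<Sum>i<m. g (i + m))"
proof -
  have "{..<2 * m} = {..<m} \<union> {m..<2 * m}" by auto
  then have "(\<Sum>i<2 * m. g i) = (\<Sum>i<m. g i) + (\<Sum>i\<in>{m..<2 * m}. g i)"
    by (metis finite_lessThan finite_atLeastLessThan ivl_disj_int_one(2) sum.union_disjoint)
  also have "(\<Sum>i\<in>{m..<2 * m}. g i) = (\<Sum>i<m. g (i + m))"
    using sum.shift_bounds_nat_ivl[of g 0 m m] by (simp add: mult_2 atLeast0LessThan)
  finally show ?thesis .
qed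

lemma rbar_eq: "rbar m r i = (if i < m then r (i + m) else if i < 2 * m then - r (i - m) else 0)"
proof -
  consider "i < m" | "m \<le> i" "i < 2 * m" | "2 * m \<le> i" by linarith
  then show ?thesis
  proof cases
    case 1
    then have "(\<Sum>j<2 * m. Jmat m i j * r j) = (\<Sum>j<2 * m. if j = i + m then r j else 0)"
      by (intro sum.cong) (auto simp: Jmat_def)
    with 1 show ?thesis by (simp add: rbar_def mvec_def)
  next
    case 2
    then have "(\<Sum>j<2 * m. Jmat m i j * r j) = (\<Sum>j<2 * m. if j = i - m then - r j else 0)"
      by (intro sum.cong) (auto simp: Jmat_def)
    with 2 show ?thesis by (simp add: rbar_def mvec_def)
  qed (simp add: rbar_def mvec_def)
qed

lemma sum_mult_rbar: "(\<Sum>k<2 * m. a k * rbar m b k) = sympl m b a"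
  unfolding sum_split_double sympl_def rbar_eq
  by (simp add: sum.distrib[symmetric] sum_subtractf[symmetric] algebra_simps)

lemma rbar_eq_sympl:
  assumes "i < 2 * m" shows "rbar m b i = sympl m b (unit_vec i)"
proof -
  have "sympl m b (unit_vec i) = (\<Sum>k<2 * m. if k = i then rbar m b k else 0)"
    unfolding sum_mult_rbar[symmetric] by (rule sum.cong) (auto simp: unit_vec_def)
  with assms show ?thesis by simp
qed

lemma Jmat_eq_sympl: "i < 2 * m \<Longrightarrow> j < 2 * m \<Longrightarrow> Jmat m i j = sympl m (unit_vec j) (unit_vec i)"
  by (auto simp: Jmat_def sympl_unit_vec)

lemma congruence_Jmat_eq_sympl:
  "mmul (2 * m) (mmul (2 * m) (mtr Q) (Jmat m)) Q i j = sympl m (\<lambda>k. Q k j) (\<lambda>k. Q k i)"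
proof -
  have "mmul (2 * m) (mmul (2 * m) (mtr Q) (Jmat m)) Q i j =
      (\<Sum>k<2 * m. Q k i * (\<Sum>l<2 * m. Jmat m k l * Q l j))"
    unfolding mmul_def mtr_def sum_distrib_left sum_distrib_right
    by (subst sum.swap) (simp add: ac_simps)
  also have "\<dots> = (\<Sum>k<2 * m. Q k i * rbar m (\<lambda>k. Q k j) k)"
    by (simp add: rbar_def mvec_def)
  finally show ?thesis by (simp add: sum_mult_rbar)
qed

lemma bil_ofi_rbar: "bil (2 * m) (ofi (rbar m r)) (ofi s) = (of_int (sympl m r s) :: 'k::field)"
  by (simp add: bil_def ofi_def sum_mult_rbar[symmetric] mult.commute)

section \<open>The elements h_r of the Witt algebra\<close>

lemma hv_eq: "hv m r = (\<lambda>s i. if s = r \<and> i < 2 * m then of_int (rbar m r i) else 0)"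
  by (simp add: hv_def Dv_def ofi_def)

lemma wscale_wscale: "wscale a (wscale b x) = wscale (a * b) x"
  by (simp add: wscale_def fun_eq_iff)

lemma wscale_one [simp]: "wscale 1 x = x"
  by (simp add: wscale_def)

lemma rbar_nonzero:
  assumes "r \<in> Znz (2 * m)"
  obtains i where "i < 2 * m" "rbar m r i \<noteq> 0"
proof -
  obtain j where j: "j < 2 * m" "r j \<noteq> 0" using Zn_nonzero_coord[OF assms] .
  show ?thesis
  proof (cases "j < m")
    case True
    with j show ?thesis by (intro that[of "j + m"]) (simp_all add: rbar_eq)
  next
    case False
    with j show ?thesis by (intro that[of "j - m"]) (simp_all add: rbar_eq)
  qed
qed

lemma wscale_hv_eq:
  fixes a b :: "'k::field_char_0"
  assumes r: "r \<in> Znz (2 * m)" and a: "a \<noteq> 0" and eq: "wscale a (hv m r) = wscale b (hv m s)"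
  shows "r = s" "a = b"
proof -
  obtain i where i: "i < 2 * m" "rbar m r i \<noteq> 0" using rbar_nonzero[OF r] .
  have "wscale a (hv m r) r i = wscale b (hv m s) r i" using eq by simp
  then have *: "a * of_int (rbar m r i) = b * (if r = s then of_int (rbar m s i) else 0)"
    using i by (simp add: wscale_def hv_eq)
  moreover have "a * of_int (rbar m r i) \<noteq> 0" using a i by simp
  ultimately show "r = s" by (auto split: if_splits)
  with * i show "a = b" by simp
qed

lemma wscale_hv_eq_zero:
  fixes a :: "'k::field_char_0"
  assumes r: "r \<in> Znz (2 * m)" and eq: "wscale a (hv m r) = (\<lambda>s i. 0)"
  shows "a = 0"
proof -
  obtain i where i: "i < 2 * m" "rbar m r i \<noteq> 0" using rbar_nonzero[OF r] .
  have "wscale a (hv m r) r i = 0" using eq by simp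
  with i show ?thesis by (simp add: wscale_def hv_eq)
qed

lemma wsupp_hv:
  assumes "r \<in> Znz (2 * m)"
  shows "wsupp (2 * m) (hv m r :: 'k::field_char_0 wel) = {r}"
proof -
  obtain i where "i < 2 * m" "rbar m r i \<noteq> 0" using rbar_nonzero[OF assms] .
  then show ?thesis by (auto simp: wsupp_def hv_eq)
qed

lemma wbr_hv:
  assumes r: "r \<in> Znz (2 * m)" and s: "s \<in> Znz (2 * m)"
  shows "wbr (2 * m) (hv m r) (hv m s) = (wscale (of_int (sympl m r s)) (hv m (r + s)) :: 'k::field_char_0 wel)"
proof (intro ext)
  fix t i
  have bil: "bil (2 * m) (hv m x x) (ofi y) = (of_int (sympl m x y) :: 'k)" for x y
    using bil_ofi_rbar[of m x y] by (simp add: bil_def hv_eq ofi_def)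
  have pair: "{r} \<times> {s} = {(r, s)}" by simp
  have "wbr (2 * m) (hv m r) (hv m s) t i =
      (if r + s = t \<and> i < 2 * m then
        bil (2 * m) (hv m r r) (ofi s) * hv m s s i - bil (2 * m) (hv m s s) (ofi r) * (hv m r r i :: 'k)
       else 0)"
    unfolding wbr_def wsupp_hv[OF r] wsupp_hv[OF s] pair by (simp add: vadd_eq)
  also have "\<dots> = wscale (of_int (sympl m r s)) (hv m (r + s)) t i"
    unfolding bil by (auto simp: wscale_def hv_eq sympl_swap[of m s r] rbar_eq algebra_simps)
  finally show "wbr (2 * m) (hv m r) (hv m s) t i = (wscale (of_int (sympl m r s)) (hv m (r + s)) t i :: 'k)" .
qed

lemma wbr_wscale:
  fixes a b :: "'k::field"
  assumes "a \<noteq> 0" "b \<noteq> 0"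
  shows "wbr N (wscale a x) (wscale b y) = wscale (a * b) (wbr N x y)"
proof -
  have supp: "wsupp N (wscale c z) = wsupp N z" if "c \<noteq> 0" for c :: 'k and z
    using that by (simp add: wsupp_def wscale_def)
  have bil: "bil N (\<lambda>i. c * u i) v = c * bil N u v" for c :: 'k and u v
    by (simp add: bil_def sum_distrib_left algebra_simps)
  show ?thesis
  proof (intro ext)
    fix t i
    show "wbr N (wscale a x) (wscale b y) t i = wscale (a * b) (wbr N x y) t i"
      unfolding wbr_def supp[OF assms(1)] supp[OF assms(2)]
      unfolding wscale_def sum_distrib_left
      by (rule sum.cong[OF refl]) (simp add: bil algebra_simps)
  qed
qed

lemma wscale_hv_Hder: "r \<in> Znz (2 * m) \<Longrightarrow> wscale a (hv m r) \<in> Hder m"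
  unfolding Hder_def zerov_eq
  by (rule CollectI, rule exI[of _ "{r}"], rule exI[of _ "\<lambda>_. a"]) (simp add: wscale_def)

lemma hv_Hder: "r \<in> Znz (2 * m) \<Longrightarrow> hv m r \<in> Hder m"
  using wscale_hv_Hder[of r m 1] by simp

lemma sum_hv_Hder: "finite F \<Longrightarrow> F \<subseteq> Znz (2 * m) \<Longrightarrow> (\<lambda>s i. \<Sum>r\<in>F. a r * hv m r s i) \<in> Hder m"
  unfolding Hder_def zerov_eq by blast

lemma zero_Hder: "(\<lambda>s i. 0) \<in> Hder m"
  using sum_hv_Hder[of "{}" m] by simp

lemma Hder_subset_Ham: "Hder m \<subseteq> Ham m"
  unfolding Ham_def by (force intro: exI[of _ "\<lambda>_. 0"])

section \<open>Root maps\<close>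

lemma lpow_scale:
  fixes a :: "'k::field"
  assumes "a \<noteq> 0"
  shows "lpow N (\<lambda>i. a * l i) r = a powi vabs N r * lpow N l r"
proof -
  have "lpow N (\<lambda>i. a * l i) r = (\<Prod>i<N. a powi r i * l i powi r i)"
    unfolding lpow_def by (simp add: power_int_mult_distrib)
  also have "\<dots> = a powi vabs N r * lpow N l r"
    using assms by (induction N) (simp_all add: lpow_def vabs_def power_int_add)
  finally show ?thesis .
qed

text \<open>Writing \<sigma>(h_r) = c_r h_{\<phi> r}, these are the conditions that the relations
  [h_r, h_s] = \<omega>(r, s) h_{r+s} impose on \<phi> and c.\<close>

locale sympl_root_map =
  fixes m :: nat and \<phi> :: "(nat \<Rightarrow> int) \<Rightarrow> nat \<Rightarrow> int" and c :: "(nat \<Rightarrow> int) \<Rightarrow> 'k::field_char_0"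
  assumes m_pos: "1 \<le> m"
    and bij: "bij_betw \<phi> (Znz (2 * m)) (Znz (2 * m))"
    and c_nonzero: "r \<in> Znz (2 * m) \<Longrightarrow> c r \<noteq> 0"
    and add_nonorth: "r \<in> Znz (2 * m) \<Longrightarrow> s \<in> Znz (2 * m) \<Longrightarrow> sympl m r s \<noteq> 0 \<Longrightarrow>
      \<phi> (r + s) = \<phi> r + \<phi> s"
    and c_nonorth: "r \<in> Znz (2 * m) \<Longrightarrow> s \<in> Znz (2 * m) \<Longrightarrow> sympl m r s \<noteq> 0 \<Longrightarrow>
      of_int (sympl m r s) * c (r + s) = c r * c s * of_int (sympl m (\<phi> r) (\<phi> s))"
    and orth: "r \<in> Znz (2 * m) \<Longrightarrow> s \<in> Znz (2 * m) \<Longrightarrow> sympl m r s = 0 \<Longrightarrow>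
      sympl m (\<phi> r) (\<phi> s) = 0"
begin

lemma \<phi>_Znz: "r \<in> Znz (2 * m) \<Longrightarrow> \<phi> r \<in> Znz (2 * m)"
  using bij by (auto simp: bij_betw_def)

lemma nonorth_preserved:
  assumes r: "r \<in> Znz (2 * m)" and s: "s \<in> Znz (2 * m)" and rs: "sympl m r s \<noteq> 0"
  shows "sympl m (\<phi> r) (\<phi> s) \<noteq> 0"
proof -
  have "r + s \<in> Znz (2 * m)" using r s sympl_nonzeroD(3)[OF rs] by auto
  then have "of_int (sympl m r s) * c (r + s) \<noteq> 0" using rs c_nonzero by simp
  then show ?thesis using c_nonorth[OF r s rs] by auto
qed

definition lin :: "(nat \<Rightarrow> int) \<Rightarrow> nat \<Rightarrow> int" where
  "lin r = (if r = 0 then 0 else \<phi> r)"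

lemma lin_additive: "Zn_additive (2 * m) lin"
  unfolding Zn_additive_def
proof (intro ballI)
  fix r s assume "r \<in> Zn (2 * m)" "s \<in> Zn (2 * m)"
  then show "lin (r + s) = lin r + lin s"
  proof (rule add.sympl_nonorth_hom_extend[where m = m, rotated 3])
    show "lin (r + s) = lin r + lin s"
      if "r \<in> Znz (2 * m)" "s \<in> Znz (2 * m)" "sympl m r s \<noteq> 0" for r s
      using that add_nonorth sympl_nonzeroD(3)[OF that(3)] by (simp add: lin_def)
  qed (simp_all add: lin_def zero_fun_def)
qed

lemma lin_bij: "bij_betw lin (Zn (2 * m)) (Zn (2 * m))"
proof -
  have "bij_betw lin (Znz (2 * m)) (Znz (2 * m))"
    using bij by (rule bij_betw_cong[THEN iffD1, rotated]) (simp add: lin_def)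
  then have "bij_betw lin (Znz (2 * m) \<union> {0}) (Znz (2 * m) \<union> {lin 0})"
    by (intro notIn_Un_bij_betw) (auto simp: lin_def)
  then show ?thesis
    by (simp add: lin_def insert_absorb)
qed

lemma lin_orth_iff:
  assumes "r \<in> Zn (2 * m)" "s \<in> Zn (2 * m)"
  shows "sympl m (lin r) (lin s) = 0 \<longleftrightarrow> sympl m r s = 0"
  using assms orth nonorth_preserved by (cases "r = 0 \<or> s = 0") (auto simp: lin_def)

definition \<mu> :: int where
  "\<mu> = sympl m (lin (unit_vec m)) (lin (unit_vec 0))"

lemma \<mu>_unit: "\<mu> = 1 \<or> \<mu> = -1"
  using sympl_orth_preserving_bij_scale_unit[OF m_pos lin_bij lin_additive lin_orth_iff]
  by (simp add: \<mu>_def)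

lemma sympl_lin: "r \<in> Zn (2 * m) \<Longrightarrow> s \<in> Zn (2 * m) \<Longrightarrow> sympl m (lin r) (lin s) = \<mu> * sympl m r s"
  unfolding \<mu>_def using m_pos lin_additive lin_orth_iff by (blast intro: sympl_orth_preserving_scale)

lemma lin_Zn: "r \<in> Zn (2 * m) \<Longrightarrow> lin r \<in> Zn (2 * m)"
  using lin_bij by (auto simp: bij_betw_def)

definition lin_inv :: "(nat \<Rightarrow> int) \<Rightarrow> nat \<Rightarrow> int" where
  "lin_inv = inv_into (Zn (2 * m)) lin"

lemma lin_inv_Zn: "r \<in> Zn (2 * m) \<Longrightarrow> lin_inv r \<in> Zn (2 * m)"
  and lin_lin_inv: "r \<in> Zn (2 * m) \<Longrightarrow> lin (lin_inv r) = r"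
  and lin_inv_lin: "r \<in> Zn (2 * m) \<Longrightarrow> lin_inv (lin r) = r"
  using lin_bij by (auto simp: lin_inv_def bij_betw_def inv_into_into f_inv_into_f)

definition Q :: "nat \<Rightarrow> nat \<Rightarrow> int" where
  "Q = mat_of lin"

definition P :: "nat \<Rightarrow> nat \<Rightarrow> int" where
  "P = mat_of lin_inv"

lemma mvec_Q: "r \<in> Zn (2 * m) \<Longrightarrow> mvec (2 * m) Q r = lin r"
  unfolding Q_def by (rule mvec_mat_of[OF lin_additive _ lin_Zn])

lemma is_inv_Q_P: "is_inv (2 * m) Q P"
  unfolding Q_def P_def lin_inv_def
  using lin_additive Zn_additive_inv_into[OF lin_bij lin_additive] lin_Zn lin_inv_Zn
    lin_lin_inv lin_inv_lin
  by (intro is_inv_mat_of) (simp_all add: lin_inv_def)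

lemma congruence_Q: "i < 2 * m \<Longrightarrow> j < 2 * m \<Longrightarrow>
    mmul (2 * m) (mmul (2 * m) (mtr Q) (Jmat m)) Q i j = \<mu> * Jmat m i j"
  by (simp add: congruence_Jmat_eq_sympl Q_def mat_of_column sympl_lin Jmat_eq_sympl Zn_unit_vec)

lemma Q_symplectic_iff: "meq (2 * m) (mmul (2 * m) (mmul (2 * m) (mtr Q) (Jmat m)) Q) (Jmat m) \<longleftrightarrow> \<mu> = 1"
proof
  assume "meq (2 * m) (mmul (2 * m) (mmul (2 * m) (mtr Q) (Jmat m)) Q) (Jmat m)"
  then have "\<mu> * Jmat m 0 m = Jmat m 0 m"
    using congruence_Q[of 0 m] m_pos by (simp add: meq_def)
  then show "\<mu> = 1" using m_pos by (simp add: Jmat_def)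
qed (simp add: meq_def congruence_Q)

lemma Q_GSp: "Q \<in> GSp m"
  using is_inv_Q_P \<mu>_unit by (auto simp: GSp_def meq_def mneg_def congruence_Q)

lemma mvec_P_rbar:
  assumes r: "r \<in> Zn (2 * m)" and i: "i < 2 * m"
  shows "mvec (2 * m) (mtr P) (rbar m r) i = \<mu> * rbar m (lin r) i"
proof -
  have e: "unit_vec i \<in> Zn (2 * m)" using i by auto
  have "mvec (2 * m) (mtr P) (rbar m r) i = sympl m r (lin_inv (unit_vec i))"
    using i by (simp add: mvec_def mtr_def P_def mat_of_def sum_mult_rbar)
  moreover have "rbar m (lin r) i = \<mu> * sympl m r (lin_inv (unit_vec i))"
    using sympl_lin[OF r lin_inv_Zn[OF e]] by (simp add: rbar_eq_sympl[OF i] lin_lin_inv[OF e])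
  ultimately show ?thesis using \<mu>_unit by auto
qed

lemma Dv_P_Q:
  assumes r: "r \<in> Znz (2 * m)"
  shows "Dv (2 * m) (ofi (mvec (2 * m) (mtr P) (rbar m r))) (mvec (2 * m) Q r) =
    wscale (of_int \<mu>) (hv m (\<phi> r))"
proof -
  have lin: "lin r = \<phi> r" using r by (simp add: lin_def)
  have P: "mvec (2 * m) (mtr P) (rbar m r) i = \<mu> * rbar m (\<phi> r) i" if "i < 2 * m" for i
    using mvec_P_rbar[of r i] r that by (simp add: lin)
  have Q: "mvec (2 * m) Q r = \<phi> r"
    using r by (simp add: mvec_Q lin)
  show ?thesis
    unfolding Q by (intro ext) (simp add: P Dv_def wscale_def hv_eq ofi_def)
qed

definition character :: "(nat \<Rightarrow> int) \<Rightarrow> 'k" where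
  "character r = (if r = 0 then 1 else of_int \<mu> * c r)"

lemma character_nonzero: "r \<in> Zn (2 * m) \<Longrightarrow> character r \<noteq> 0"
  using c_nonzero \<mu>_unit by (auto simp: character_def)

lemma character_mult:
  assumes "r \<in> Zn (2 * m)" "s \<in> Zn (2 * m)"
  shows "character (r + s) = character r * character s"
  using assms
proof (rule mult.sympl_nonorth_hom_extend[where m = m, rotated 3])
  have \<mu>_sq: "of_int \<mu> * of_int \<mu> = (1 :: 'k)"
    using \<mu>_unit by auto
  show "character (r + s) = character r * character s"
    if rs: "r \<in> Znz (2 * m)" "s \<in> Znz (2 * m)" "sympl m r s \<noteq> 0" for r s
  proof -
    have "of_int (sympl m r s) * c (r + s) = of_int (sympl m r s) * (of_int \<mu> * (c r * c s))"
      using c_nonorth[OF rs] sympl_lin[of r s] rs by (simp add: lin_def ac_simps)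
    then have "of_int \<mu> * c (r + s) = (of_int \<mu> * of_int \<mu>) * (c r * c s)"
      using rs(3) by simp
    also have "\<dots> = (of_int \<mu> * c r) * (of_int \<mu> * c s)"
      by (simp add: ac_simps)
    finally show ?thesis
      using rs sympl_nonzeroD(3)[OF rs(3)] by (simp add: character_def \<mu>_sq)
  qed
  show "x = y" if "r \<in> Znz (2 * m)" "character r * x = character r * y" for r x y
    using that character_nonzero by simp
qed (simp add: character_def zero_fun_def)

definition lam :: "nat \<Rightarrow> 'k" where
  "lam j = character (unit_vec j)"

lemma c_eq_lpow:
  assumes r: "r \<in> Znz (2 * m)"
  shows "c r = of_int \<mu> * lpow (2 * m) lam r"
proof -
  have "of_int \<mu> * c r = lpow (2 * m) lam r"
    using Zn_multiplicative_expansion[of "2 * m" character r] character_mult character_nonzero r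
    by (simp add: character_def lam_def lpow_def)
  moreover have "c r = (of_int \<mu> * of_int \<mu>) * c r"
    using \<mu>_unit by auto
  ultimately show ?thesis by (simp add: mult.assoc)
qed

theorem normal_form:
  fixes \<sigma> :: "'k wel \<Rightarrow> 'k wel"
  assumes \<sigma>_hv: "\<And>r. r \<in> Znz (2 * m) \<Longrightarrow> \<sigma> (hv m r) = wscale (c r) (hv m (\<phi> r))"
  shows "\<exists>(l :: nat \<Rightarrow> 'k) Q P. (\<forall>i<2*m. l i \<noteq> 0) \<and> Q \<in> GSp m \<and> is_inv (2*m) Q P \<and>
     (\<forall>r\<in>Zn (2*m) - {zerov}.
        \<sigma> (Dv (2*m) (ofi (rbar m r)) r) =
          (if meq (2*m) (mmul (2*m) (mmul (2*m) (mtr Q) (Jmat m)) Q) (Jmat m)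
           then wscale (lpow (2*m) l r)
                  (Dv (2*m) (ofi (mvec (2*m) (mtr P) (rbar m r))) (mvec (2*m) Q r))
           else wscale ((-1) powi (vabs (2*m) r) * lpow (2*m) l r)
                  (Dv (2*m) (ofi (mvec (2*m) (mtr P) (rbar m r))) (mvec (2*m) Q r))))"
proof (intro exI conjI ballI)
  txt \<open>With l = \<mu> \<lambda>, the factor \<mu>^{|r|} in l^r cancels the sign (-1)^{|r|} demanded when \<mu> = -1.\<close>
  let ?l = "\<lambda>i. of_int \<mu> * lam i"
  show "\<forall>i<2 * m. ?l i \<noteq> 0"
    using character_nonzero \<mu>_unit by (auto simp: lam_def)
  show "Q \<in> GSp m" "is_inv (2 * m) Q P"
    by (fact Q_GSp is_inv_Q_P)+
  fix r assume "r \<in> Zn (2 * m) - {zerov}"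
  then have r: "r \<in> Znz (2 * m)" by (simp add: zerov_eq)
  have "lpow (2 * m) ?l r = of_int \<mu> powi vabs (2 * m) r * lpow (2 * m) lam r"
    using \<mu>_unit by (intro lpow_scale) auto
  then have sign: "(if \<mu> = 1 then 1 else (-1) powi vabs (2 * m) r) * lpow (2 * m) ?l r = lpow (2 * m) lam r"
    using \<mu>_unit by (auto simp: power_int_mult_distrib[symmetric])
  have "\<sigma> (hv m r) =
      wscale ((if \<mu> = 1 then 1 else (-1) powi vabs (2 * m) r) * lpow (2 * m) ?l r)
        (wscale (of_int \<mu>) (hv m (\<phi> r)))"
    using sign c_eq_lpow[OF r] \<sigma>_hv[OF r] by (simp add: wscale_wscale mult.commute)
  then show "\<sigma> (Dv (2*m) (ofi (rbar m r)) r) =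
      (if meq (2*m) (mmul (2*m) (mmul (2*m) (mtr Q) (Jmat m)) Q) (Jmat m)
       then wscale (lpow (2*m) ?l r) (Dv (2*m) (ofi (mvec (2*m) (mtr P) (rbar m r))) (mvec (2*m) Q r))
       else wscale ((-1) powi (vabs (2*m) r) * lpow (2*m) ?l r)
              (Dv (2*m) (ofi (mvec (2*m) (mtr P) (rbar m r))) (mvec (2*m) Q r)))"
    by (simp add: Q_symplectic_iff Dv_P_Q[OF r] flip: hv_def)
qed

end

section \<open>Automorphisms\<close>

lemma lie_aut_restrict:
  assumes "lie_aut N L \<sigma>" "L' \<subseteq> L" "\<sigma> ` L' = L'"
  shows "lie_aut N L' \<sigma>"
  using assms unfolding lie_aut_def bij_betw_def by (blast intro: inj_on_subset)

lemma lie_aut_zero: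
  assumes "lie_aut N L \<sigma>" "(\<lambda>s i. 0) \<in> L"
  shows "\<sigma> (\<lambda>s i. 0) = (\<lambda>s i. 0)"
proof -
  have "\<sigma> (wscale 0 (\<lambda>s i. 0)) = wscale 0 (\<sigma> (\<lambda>s i. 0))"
    using assms by (simp add: lie_aut_def)
  then show ?thesis by (simp add: wscale_def)
qed

lemma lie_aut_line_images:
  fixes \<sigma> :: "'k::field_char_0 wel \<Rightarrow> 'k wel"
  assumes aut: "lie_aut (2 * m) (Hder m) \<sigma>"
    and lines: "\<And>r. r \<in> Znz (2 * m) \<Longrightarrow> \<exists>s\<in>Znz (2 * m). \<sigma> ` kline (hv m r) = kline (hv m s)"
  obtains \<phi> c where "\<And>r. r \<in> Znz (2 * m) \<Longrightarrow> \<phi> r \<in> Znz (2 * m)"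
    and "\<And>r. r \<in> Znz (2 * m) \<Longrightarrow> c r \<noteq> 0"
    and "\<And>r. r \<in> Znz (2 * m) \<Longrightarrow> \<sigma> (hv m r) = wscale (c r) (hv m (\<phi> r))"
proof -
  have "\<exists>s\<in>Znz (2 * m). \<exists>a. \<sigma> (hv m r) = wscale a (hv m s)" if r: "r \<in> Znz (2 * m)" for r
  proof -
    obtain s where s: "s \<in> Znz (2 * m)" "\<sigma> ` kline (hv m r) = kline (hv m s)"
      using lines[OF r] ..
    have "hv m r \<in> kline (hv m r)"
      unfolding kline_def by (rule CollectI, rule exI[of _ 1]) simp
    then have "\<sigma> (hv m r) \<in> kline (hv m s)" using s(2) by blast
    with s(1) show ?thesis by (auto simp: kline_def)
  qed
  then obtain \<phi> where "\<forall>r\<in>Znz (2 * m). \<phi> r \<in> Znz (2 * m) \<and> (\<exists>a. \<sigma> (hv m r) = wscale a (hv m (\<phi> r)))"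
    by metis
  moreover then obtain c where "\<forall>r\<in>Znz (2 * m). \<sigma> (hv m r) = wscale (c r) (hv m (\<phi> r))"
    by metis
  moreover have "c r \<noteq> 0" if r: "r \<in> Znz (2 * m)" and \<sigma>_hv: "\<sigma> (hv m r) = wscale (c r) (hv m (\<phi> r))" for r
  proof
    assume "c r = 0"
    then have "\<sigma> (hv m r) = \<sigma> (\<lambda>s i. 0 :: 'k)"
      using \<sigma>_hv lie_aut_zero[OF aut zero_Hder] by (simp add: wscale_def)
    then have "hv m r = (\<lambda>s i. 0 :: 'k)"
      using aut inj_onD[of \<sigma> "Hder m", OF _ _ hv_Hder[OF r] zero_Hder]
      by (simp add: lie_aut_def bij_betw_def)
    then have "wscale 1 (hv m r) = (\<lambda>s i. 0 :: 'k)" by simp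
    from wscale_hv_eq_zero[OF r this] show False by simp
  qed
  ultimately show ?thesis using that by blast
qed

context
  fixes m :: nat and \<sigma> :: "'k::field_char_0 wel \<Rightarrow> 'k wel"
    and \<phi> :: "(nat \<Rightarrow> int) \<Rightarrow> nat \<Rightarrow> int" and c :: "(nat \<Rightarrow> int) \<Rightarrow> 'k"
  assumes aut: "lie_aut (2 * m) (Hder m) \<sigma>"
    and \<phi>_Znz: "\<And>r. r \<in> Znz (2 * m) \<Longrightarrow> \<phi> r \<in> Znz (2 * m)"
    and c_nonzero: "\<And>r. r \<in> Znz (2 * m) \<Longrightarrow> c r \<noteq> 0"
    and \<sigma>_hv: "\<And>r. r \<in> Znz (2 * m) \<Longrightarrow> \<sigma> (hv m r) = wscale (c r) (hv m (\<phi> r))"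
begin

lemma aut_inj: "inj_on \<sigma> (Hder m)"
  and aut_image: "\<sigma> ` Hder m = Hder m"
  and aut_wadd: "x \<in> Hder m \<Longrightarrow> y \<in> Hder m \<Longrightarrow> \<sigma> (wadd x y) = wadd (\<sigma> x) (\<sigma> y)"
  and aut_wscale: "x \<in> Hder m \<Longrightarrow> \<sigma> (wscale a x) = wscale a (\<sigma> x)"
  and aut_wbr: "x \<in> Hder m \<Longrightarrow> y \<in> Hder m \<Longrightarrow> \<sigma> (wbr (2 * m) x y) = wbr (2 * m) (\<sigma> x) (\<sigma> y)"
  using aut by (simp_all add: lie_aut_def bij_betw_def)

lemma aut_bracket_hv:
  assumes r: "r \<in> Znz (2 * m)" and s: "s \<in> Znz (2 * m)"
  shows "\<sigma> (wscale (of_int (sympl m r s)) (hv m (r + s))) =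
    wscale (c r * c s * of_int (sympl m (\<phi> r) (\<phi> s))) (hv m (\<phi> r + \<phi> s))"
proof -
  have "\<sigma> (wscale (of_int (sympl m r s)) (hv m (r + s))) = \<sigma> (wbr (2 * m) (hv m r) (hv m s))"
    by (simp add: wbr_hv[OF r s])
  also have "\<dots> = wbr (2 * m) (wscale (c r) (hv m (\<phi> r))) (wscale (c s) (hv m (\<phi> s)))"
    using aut_wbr[OF hv_Hder[OF r] hv_Hder[OF s]] by (simp add: \<sigma>_hv[OF r] \<sigma>_hv[OF s])
  also have "\<dots> = wscale (c r * c s) (wscale (of_int (sympl m (\<phi> r) (\<phi> s))) (hv m (\<phi> r + \<phi> s)))"
    by (simp add: wbr_wscale[OF c_nonzero[OF r] c_nonzero[OF s]] wbr_hv[OF \<phi>_Znz[OF r] \<phi>_Znz[OF s]])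
  finally show ?thesis by (simp add: wscale_wscale)
qed

lemma aut_sum_hv:
  assumes "finite F" "F \<subseteq> Znz (2 * m)"
  shows "\<sigma> (\<lambda>t i. \<Sum>x\<in>F. a x * hv m x t i) = (\<lambda>t i. \<Sum>x\<in>F. a x * c x * hv m (\<phi> x) t i)"
  using assms
proof (induction F rule: finite_induct)
  case empty
  then show ?case using lie_aut_zero[OF aut zero_Hder] by simp
next
  case (insert x F)
  then have x: "x \<in> Znz (2 * m)" and F: "F \<subseteq> Znz (2 * m)" by blast+
  have "(\<lambda>t i. \<Sum>y\<in>insert x F. a y * hv m y t i) =
      wadd (wscale (a x) (hv m x)) (\<lambda>t i. \<Sum>y\<in>F. a y * hv m y t i)"
    using insert.hyps by (simp add: wadd_def wscale_def)
  then have "\<sigma> (\<lambda>t i. \<Sum>y\<in>insert x F. a y * hv m y t i) =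
      wadd (wscale (a x) (wscale (c x) (hv m (\<phi> x)))) (\<lambda>t i. \<Sum>y\<in>F. a y * c y * hv m (\<phi> y) t i)"
    using insert.IH[OF F] x
    by (simp add: aut_wadd aut_wscale wscale_hv_Hder hv_Hder sum_hv_Hder[OF insert.hyps(1) F] \<sigma>_hv)
  also have "\<dots> = (\<lambda>t i. \<Sum>y\<in>insert x F. a y * c y * hv m (\<phi> y) t i)"
    using insert.hyps by (simp add: wadd_def wscale_def fun_eq_iff algebra_simps)
  finally show ?case .
qed

lemma aut_root_map_inj: "inj_on \<phi> (Znz (2 * m))"
proof (rule inj_onI)
  fix x y assume x: "x \<in> Znz (2 * m)" and y: "y \<in> Znz (2 * m)" and eq: "\<phi> x = \<phi> y"
  have "\<sigma> (hv m x) = \<sigma> (wscale (c x / c y) (hv m y))"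
    using eq c_nonzero[OF y]
    by (simp add: \<sigma>_hv[OF x] \<sigma>_hv[OF y] aut_wscale[OF hv_Hder[OF y]] wscale_wscale)
  then have "wscale 1 (hv m x) = wscale (c x / c y) (hv m y)"
    using inj_onD[OF aut_inj _ hv_Hder[OF x] wscale_hv_Hder[OF y]] by simp
  then show "x = y" by (rule wscale_hv_eq(1)[OF x one_neq_zero])
qed

lemma aut_root_map_surj: "Znz (2 * m) \<subseteq> \<phi> ` Znz (2 * m)"
proof
  fix s assume s: "s \<in> Znz (2 * m)"
  have "hv m s \<in> \<sigma> ` Hder m" using aut_image hv_Hder[OF s] by simp
  then obtain y where y: "y \<in> Hder m" "hv m s = \<sigma> y" by blast
  then obtain F a where F: "finite F" "F \<subseteq> Znz (2 * m)" and y_eq: "y = (\<lambda>t i. \<Sum>x\<in>F. a x * hv m x t i)"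
    unfolding Hder_def zerov_eq by blast
  obtain i where i: "i < 2 * m" "rbar m s i \<noteq> 0" using rbar_nonzero[OF s] .
  show "s \<in> \<phi> ` Znz (2 * m)"
  proof (rule ccontr)
    assume "s \<notin> \<phi> ` Znz (2 * m)"
    with F(2) have "\<forall>x\<in>F. \<phi> x \<noteq> s" by blast
    then have "(\<Sum>x\<in>F. a x * c x * hv m (\<phi> x) s i) = 0"
      by (intro sum.neutral) (auto simp: hv_eq)
    moreover have "hv m s s i = (\<Sum>x\<in>F. a x * c x * hv m (\<phi> x) s i)"
      using aut_sum_hv[OF F, of a] y y_eq by simp
    ultimately show False using i by (simp add: hv_eq)
  qed
qed

lemma aut_sympl_root_map:
  assumes m: "1 \<le> m"
  shows "sympl_root_map m \<phi> c"
proof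
  show "1 \<le> m" by (fact m)
  show "bij_betw \<phi> (Znz (2 * m)) (Znz (2 * m))"
    using aut_root_map_inj aut_root_map_surj \<phi>_Znz by (auto simp: bij_betw_def)
  show "c r \<noteq> 0" if "r \<in> Znz (2 * m)" for r using c_nonzero that .
  fix r s assume r: "r \<in> Znz (2 * m)" and s: "s \<in> Znz (2 * m)"
  show "sympl m (\<phi> r) (\<phi> s) = 0" if "sympl m r s = 0"
  proof (cases "\<phi> r + \<phi> s = 0")
    case True
    then show ?thesis by (simp add: eq_neg_iff_add_eq_0[symmetric] sympl_minus_left)
  next
    case False
    then have "\<phi> r + \<phi> s \<in> Znz (2 * m)" using \<phi>_Znz r s by auto
    moreover have "wscale (c r * c s * of_int (sympl m (\<phi> r) (\<phi> s))) (hv m (\<phi> r + \<phi> s)) = (\<lambda>t i. 0)"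
      using aut_bracket_hv[OF r s] that lie_aut_zero[OF aut zero_Hder] by (simp add: wscale_def)
    ultimately have "c r * c s * of_int (sympl m (\<phi> r) (\<phi> s)) = 0"
      by (rule wscale_hv_eq_zero)
    then show ?thesis using c_nonzero[OF r] c_nonzero[OF s] by simp
  qed
  assume rs: "sympl m r s \<noteq> 0"
  then have rs_Znz: "r + s \<in> Znz (2 * m)" using r s sympl_nonzeroD(3) by auto
  have "wscale (of_int (sympl m r s) * c (r + s)) (hv m (\<phi> (r + s))) =
      wscale (c r * c s * of_int (sympl m (\<phi> r) (\<phi> s))) (hv m (\<phi> r + \<phi> s))"
    using aut_bracket_hv[OF r s]
    by (simp add: aut_wscale[OF hv_Hder[OF rs_Znz]] \<sigma>_hv[OF rs_Znz] wscale_wscale)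
  moreover have "of_int (sympl m r s) * c (r + s) \<noteq> 0" using rs c_nonzero[OF rs_Znz] by simp
  ultimately show "\<phi> (r + s) = \<phi> r + \<phi> s"
    and "of_int (sympl m r s) * c (r + s) = c r * c s * of_int (sympl m (\<phi> r) (\<phi> s))"
    using wscale_hv_eq[OF \<phi>_Znz[OF rs_Znz]] by blast+
qed

end

theorem lemma3p1:
  fixes m :: nat and \<sigma> :: "'k::field_char_0 wel \<Rightarrow> 'k wel"
  assumes alg_closed: "\<forall>p :: 'k poly. degree p \<ge> 1 \<longrightarrow> (\<exists>x. poly p x = 0)"
    and m_pos: "m \<ge> 1"
    and aut: "lie_aut (2*m) (Hder m) \<sigma> \<or>
              (lie_aut (2*m) (Ham m) \<sigma> \<and> \<sigma> ` Hder m = Hder m)"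
    and lines: "\<forall>r\<in>Zn (2*m) - {zerov}. \<exists>s\<in>Zn (2*m) - {zerov}.
                  \<sigma> ` kline (hv m r) = kline (hv m s) \<and>
                  \<sigma> ` kline (hv m (vneg r)) = kline (hv m (vneg s))"
  shows "\<exists>(l :: nat \<Rightarrow> 'k) Q P. (\<forall>i<2*m. l i \<noteq> 0) \<and> Q \<in> GSp m \<and> is_inv (2*m) Q P \<and>
           (\<forall>r\<in>Zn (2*m) - {zerov}.
              \<sigma> (Dv (2*m) (ofi (rbar m r)) r) =
                (if meq (2*m) (mmul (2*m) (mmul (2*m) (mtr Q) (Jmat m)) Q) (Jmat m)
                 then wscale (lpow (2*m) l r)
                        (Dv (2*m) (ofi (mvec (2*m) (mtr P) (rbar m r))) (mvec (2*m) Q r))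
                 else wscale ((-1) powi (vabs (2*m) r) * lpow (2*m) l r)
                        (Dv (2*m) (ofi (mvec (2*m) (mtr P) (rbar m r))) (mvec (2*m) Q r))))"
proof -
  have aut_Hder: "lie_aut (2 * m) (Hder m) \<sigma>"
    using aut lie_aut_restrict[OF _ Hder_subset_Ham] by blast
  have line_images: "\<exists>s\<in>Znz (2 * m). \<sigma> ` kline (hv m r) = kline (hv m s)"
    if "r \<in> Znz (2 * m)" for r
  proof -
    have "r \<in> Zn (2 * m) - {zerov}" using that by (simp add: zerov_eq)
    from bspec[OF lines this] obtain s where "s \<in> Zn (2 * m) - {zerov}"
      and "\<sigma> ` kline (hv m r) = kline (hv m s)"
      by (elim bexE conjE)
    then show ?thesis unfolding zerov_eq by blast
  qed
  obtain \<phi> c where \<phi>: "\<And>r. r \<in> Znz (2 * m) \<Longrightarrow> \<phi> r \<in> Znz (2 * m)"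
    and c: "\<And>r. r \<in> Znz (2 * m) \<Longrightarrow> c r \<noteq> 0"
    and \<sigma>_hv: "\<And>r. r \<in> Znz (2 * m) \<Longrightarrow> \<sigma> (hv m r) = wscale (c r) (hv m (\<phi> r))"
    using lie_aut_line_images[OF aut_Hder line_images] by metis
  interpret sympl_root_map m \<phi> c
    using aut_sympl_root_map[OF aut_Hder \<phi> c \<sigma>_hv m_pos] .
  show ?thesis
    by (rule normal_form[OF \<sigma>_hv])
qed

end
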